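(* For any finite nonsolvable group $G$, there exists a finite non-abelian simple group $H$ with $|\mathrm{Solv}(G)| \geq |\mathrm{Solv}(H)|$.
   Context: For a finite group $G$ and $x \in G$, the solvabilizer of $x$ in $G$ is $\mathrm{Sol}_G(x) = \{y \in G : \langle x, y \rangle \text{ is solvable}\}$. $\mathrm{Solv}(G) = \{\mathrm{Sol}_G(x) : x \in G\}$ is the set of distinct solvabilizers of elements of $G$. *)

theory Defs
  imports "HOL-Algebra.Solvable_Groups" "HOL-Algebra.SimpleGroups" "HOL-Algebra.Generated_Groups"
begin

definition solvabilizer :: "('a, 'b) monoid_scheme \<Rightarrow> 'a \<Rightarrow> 'a set" where
  "solvabilizer G x = {y \<in> carrier G. solvable (G\<lparr>carrier := generate G {x, y}\<rparr>)}"

definition Solv :: "('a, 'b) monoid_scheme \<Rightarrow> 'a set set" where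
  "Solv G = solvabilizer G ` carrier G"

end

theory Submission
  imports Defs
begin

text \<open>A finite nonsolvable group G contains a minimal nonsolvable subgroup K; every proper
subgroup of K is solvable. For a maximal normal subgroup N of K, the quotient Q = K/N is simple
and nonsolvable, while N is solvable. Since N is solvable, a subgroup of K is solvable iff its
image in Q is, so the solvabilizer of the coset of x in Q is the image of the solvabilizer of x
in G intersected with K. Hence every solvabilizer of Q arises from one of G, and
|Solv(Q)| \<le> |Solv(G)|. Finally Q is transported to an isomorphic group on nat.\<close>

lemma (in group) solvable_subgroup_iff_solvable_seq:
  assumes "subgroup A G"
  shows "solvable (G\<lparr>carrier := A\<rparr>) \<longleftrightarrow> solvable_seq G A"
proof -
  have "group_hom (G\<lparr>carrier := A\<rparr>) G id"
    using subgroup.subgroup_is_group[OF assms is_group] subgroup.subset[OF assms]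
    by (auto simp: group_hom_def group_hom_axioms_def hom_def)
  then interpret incl: group_hom "G\<lparr>carrier := A\<rparr>" G id .
  show ?thesis
    using incl.solvable_imp_solvable_img[of A] incl.solvable_img_imp_solvable[of A]
      incl.G.subgroup_self
    by (auto simp: solvable_def)
qed

lemma (in group_hom) solvable_seq_iff_img_of_solvable_kernel:
  assumes A: "subgroup A G" and ker: "solvable_seq G (kernel G H h)"
  shows "solvable_seq G A \<longleftrightarrow> solvable_seq H (h ` A)"
proof
  assume "solvable_seq H (h ` A)"
  then obtain m where m: "(derived H ^^ m) (h ` A) = {\<one>\<^bsub>H\<^esub>}"
    using H.solvable_imp_trivial_derived_seq by blast
  obtain n where n: "(derived G ^^ n) (kernel G H h) = {\<one>}"
    using G.solvable_imp_trivial_derived_seq[OF ker] by blast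
  have "h ` (derived G ^^ m) A = {\<one>\<^bsub>H\<^esub>}"
    using m exp_of_derived_img[OF subgroup.subset[OF A]] by simp
  then have "(derived G ^^ m) A \<subseteq> kernel G H h"
    using G.exp_of_derived_in_carrier[OF subgroup.subset[OF A]] by (auto simp: kernel_def)
  then have "(derived G ^^ n) ((derived G ^^ m) A) \<subseteq> {\<one>}"
    using G.mono_exp_of_derived n by blast
  then have "(derived G ^^ (n + m)) A \<subseteq> {\<one>}"
    by (simp add: funpow_add)
  moreover have "\<one> \<in> (derived G ^^ (n + m)) A"
    using subgroup.one_closed[OF G.exp_of_derived_is_subgroup[OF A]] .
  ultimately show "solvable_seq G A"
    using G.trivial_derived_seq_imp_solvable[OF A, of "n + m"] by blast
qed (rule solvable_imp_solvable_img)

lemma (in group) solvabilizer_eq: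
  assumes "x \<in> carrier G"
  shows "solvabilizer G x = {y \<in> carrier G. solvable_seq G (generate G {x, y})}"
  using assms generate_is_subgroup[of "{x, _}"] solvable_subgroup_iff_solvable_seq
  by (auto simp: solvabilizer_def)

lemma (in group_hom) solvabilizer_img:
  assumes ker: "solvable_seq G (kernel G H h)" and surj: "h ` carrier G = carrier H"
    and x: "x \<in> carrier G"
  shows "solvabilizer H (h x) = h ` solvabilizer G x"
proof -
  have "solvable_seq H (generate H {h x, h y}) \<longleftrightarrow> solvable_seq G (generate G {x, y})"
    if y: "y \<in> carrier G" for y
    using x y generate_img[of "{x, y}"] G.generate_is_subgroup[of "{x, y}"]
      solvable_seq_iff_img_of_solvable_kernel[OF _ ker]
    by simp
  then have "{z \<in> h ` carrier G. solvable_seq H (generate H {h x, z})}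
      = h ` {y \<in> carrier G. solvable_seq G (generate G {x, y})}"
    by auto
  then show ?thesis
    using x surj G.solvabilizer_eq H.solvabilizer_eq[of "h x"] by simp
qed

lemma (in group_hom) card_Solv_le_of_solvable_kernel:
  assumes fin: "finite (carrier G)" and ker: "solvable_seq G (kernel G H h)"
    and surj: "h ` carrier G = carrier H"
  shows "card (Solv H) \<le> card (Solv G)"
proof -
  have "Solv H = (\<lambda>x. solvabilizer H (h x)) ` carrier G"
    unfolding Solv_def surj[symmetric] by (simp add: image_image)
  also have "\<dots> = (image h) ` Solv G"
    unfolding Solv_def using solvabilizer_img[OF ker surj] by (simp add: image_image)
  finally show ?thesis
    using fin by (simp add: Solv_def card_image_le)
qed

lemma (in group) card_Solv_subgroup_le:
  assumes fin: "finite (carrier G)" and K: "subgroup K G"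
  shows "card (Solv (G\<lparr>carrier := K\<rparr>)) \<le> card (Solv G)"
proof -
  have "solvabilizer (G\<lparr>carrier := K\<rparr>) x = solvabilizer G x \<inter> K" if x: "x \<in> K" for x
    using x subgroup.subset[OF K] generate_consistent[OF _ K, of "{x, _}"]
    by (auto simp: solvabilizer_def)
  then have "Solv (G\<lparr>carrier := K\<rparr>) = (\<lambda>S. S \<inter> K) ` solvabilizer G ` K"
    by (simp add: Solv_def image_image)
  also have "\<dots> \<subseteq> (\<lambda>S. S \<inter> K) ` Solv G"
    unfolding Solv_def using subgroup.subset[OF K] by blast
  finally show ?thesis
    using fin by (simp add: Solv_def surj_card_le)
qed

lemma (in normal) kernel_r_coset_Mod: "kernel G (G Mod H) ((#>) H) = H"
  using rcos_const[OF is_group] rcos_self[OF _ subgroup_axioms] subset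
  by (auto simp: kernel_def FactGroup_def)

lemma (in normal) group_hom_r_coset_Mod: "group_hom G (G Mod H) ((#>) H)"
  using r_coset_hom_Mod factorgroup_is_group by (simp add: group_hom_def group_hom_axioms_def)

lemma (in normal) r_coset_image_carrier: "(#>) H ` carrier G = carrier (G Mod H)"
  by (auto simp: FactGroup_def RCOSETS_def)

lemma (in normal) solvable_FactGroup_iff:
  assumes "solvable_seq G H"
  shows "solvable (G Mod H) \<longleftrightarrow> solvable G"
  using group_hom.solvable_seq_iff_img_of_solvable_kernel[OF group_hom_r_coset_Mod subgroup_self]
    assms kernel_r_coset_Mod r_coset_image_carrier
  by (simp add: solvable_def)

lemma (in normal) card_Solv_FactGroup_le:
  assumes "finite (carrier G)" and "solvable_seq G H"
  shows "card (Solv (G Mod H)) \<le> card (Solv G)"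
  using group_hom.card_Solv_le_of_solvable_kernel[OF group_hom_r_coset_Mod]
    assms kernel_r_coset_Mod r_coset_image_carrier
  by simp

lemma (in group) simple_FactGroup_of_maximal_normal:
  assumes fin: "finite (carrier G)" and N: "N \<lhd> G" and proper: "N \<noteq> carrier G"
    and max: "\<And>M. M \<lhd> G \<Longrightarrow> M \<noteq> carrier G \<Longrightarrow> card M \<le> card N"
  shows "simple_group (G Mod N)"
proof -
  interpret N: normal N G by fact
  interpret Q: group "G Mod N" by (rule N.factorgroup_is_group)
  have one: "\<one>\<^bsub>G Mod N\<^esub> = N" by (simp add: FactGroup_def)
  show ?thesis
  proof unfold_locales
    have "carrier (G Mod N) \<noteq> {\<one>\<^bsub>G Mod N\<^esub>}"
      using N.fact_group_trivial_iff fin proper by blast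
    moreover have "finite (carrier (G Mod N))"
      using fin by (simp add: FactGroup_def RCOSETS_def)
    ultimately show "1 < order (G Mod N)"
      using Q.order_one_triv_iff Q.order_gt_0_iff_finite by linarith
  next
    fix X assume X: "X \<lhd> G Mod N"
    then have sX: "subgroup X (G Mod N)" by (rule normal_imp_subgroup)
    have X_eq: "X = rcosets\<^bsub>G\<lparr>carrier := \<Union>X\<rparr>\<^esub> N"
      by (rule N.factgroup_subgroup_union_factor[OF sX])
    have "N \<subseteq> \<Union>X"
      using subgroup.one_closed[OF sX] one by auto
    moreover have "\<Union>X \<lhd> G"
      by (rule N.factgroup_subgroup_union_normal[OF X])
    moreover have "finite (\<Union>X)"
      using calculation(2) normal_imp_subgroup subgroup.subset fin finite_subset by metis
    ultimately consider "\<Union>X = carrier G" | "\<Union>X = N"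
      using max card_seteq by metis
    then show "X = carrier (G Mod N) \<or> X = {\<one>\<^bsub>G Mod N\<^esub>}"
    proof cases
      case 1
      then show ?thesis using X_eq by (simp add: FactGroup_def)
    next
      case 2
      then have "X = {N #> a | a. a \<in> N}"
        using X_eq by (auto simp: RCOSETS_def r_coset_def)
      also have "\<dots> = {N}"
        using N.rcos_const[OF is_group] N.one_closed by blast
      finally show ?thesis using one by simp
    qed
  qed
qed

lemma (in group) exists_simple_FactGroup:
  assumes fin: "finite (carrier G)" and nontrivial: "carrier G \<noteq> {\<one>}"
  obtains N where "N \<lhd> G" "simple_group (G Mod N)"
proof -
  let ?P = "\<lambda>M. M \<lhd> G \<and> M \<noteq> carrier G"
  have "?P {\<one>}" using one_is_normal nontrivial by blast
  moreover have "card M < Suc (card (carrier G))" if "?P M" for M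
    using that normal_imp_subgroup subgroup.subset fin card_mono by (metis less_Suc_eq_le)
  ultimately obtain N where "?P N" "\<And>M. ?P M \<Longrightarrow> card M \<le> card N"
    using Lattices_Big.ex_has_greatest_nat[of ?P "{\<one>}" card] by blast
  then show ?thesis
    using that simple_FactGroup_of_maximal_normal fin by blast
qed

lemma (in group) exists_minimal_nonsolvable_subgroup:
  assumes fin: "finite (carrier G)" and nonsolv: "\<not> solvable G"
  obtains K where "subgroup K G" "\<not> solvable_seq G K"
    "\<And>J. subgroup J G \<Longrightarrow> J \<subset> K \<Longrightarrow> solvable_seq G J"
proof -
  let ?P = "\<lambda>J. subgroup J G \<and> \<not> solvable_seq G J"
  have "?P (carrier G)" using subgroup_self nonsolv by (simp add: solvable_def)
  then obtain K where K: "?P K" and least: "\<And>J. ?P J \<Longrightarrow> card K \<le> card J"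
    using ex_has_least_nat[of ?P "carrier G" card] by blast
  have "finite K" using K subgroup.subset fin finite_subset by blast
  then have "solvable_seq G J" if "subgroup J G" "J \<subset> K" for J
    using that least[of J] psubset_card_mono[of K J] by linarith
  then show ?thesis using that K by blast
qed

lemma (in group) exists_nonsolvable_simple_section:
  assumes fin: "finite (carrier G)" and nonsolv: "\<not> solvable G"
  obtains K N where "subgroup K G" "N \<lhd> G\<lparr>carrier := K\<rparr>" "solvable_seq (G\<lparr>carrier := K\<rparr>) N"
    "simple_group (G\<lparr>carrier := K\<rparr> Mod N)" "\<not> solvable (G\<lparr>carrier := K\<rparr> Mod N)"
proof -
  obtain K where K: "subgroup K G" and K_nonsolv: "\<not> solvable_seq G K"
    and K_min: "\<And>J. subgroup J G \<Longrightarrow> J \<subset> K \<Longrightarrow> solvable_seq G J"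
    using exists_minimal_nonsolvable_subgroup[OF fin nonsolv] by blast
  define GK where "GK = G\<lparr>carrier := K\<rparr>"
  interpret GK: group GK
    unfolding GK_def by (rule subgroup.subgroup_is_group[OF K is_group])
  have GK_nonsolv: "\<not> solvable GK"
    using K_nonsolv solvable_subgroup_iff_solvable_seq[OF K] by (simp add: GK_def)
  have "finite (carrier GK)"
    using fin subgroup.subset[OF K] finite_subset by (auto simp: GK_def)
  moreover have "carrier GK \<noteq> {\<one>\<^bsub>GK\<^esub>}"
    using GK_nonsolv solvable_seq.unity[of GK] by (auto simp: solvable_def)
  ultimately obtain N where N: "N \<lhd> GK" and simple: "simple_group (GK Mod N)"
    using GK.exists_simple_FactGroup by blast
  interpret N: normal N GK by (rule N)
  have "N \<noteq> K"
    using simple GK.self_factor_not_simple by (auto simp: GK_def)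
  moreover have N_G: "subgroup N G"
    using incl_subgroup[OF K] N.subgroup_axioms by (simp add: GK_def)
  moreover have "N \<subseteq> K"
    using N.subset by (simp add: GK_def)
  ultimately have "solvable_seq G N" using K_min by blast
  then have N_solv: "solvable_seq GK N"
    using solvable_subgroup_iff_solvable_seq[OF N_G] GK.solvable_subgroup_iff_solvable_seq[OF N.subgroup_axioms]
    by (simp add: GK_def)
  show ?thesis
  proof (rule that[OF K])
    show "\<not> solvable (G\<lparr>carrier := K\<rparr> Mod N)"
      using GK_nonsolv N.solvable_FactGroup_iff[OF N_solv] by (simp add: GK_def)
  qed (use N N_solv simple in \<open>simp_all add: GK_def\<close>)
qed

lemma exists_iso_nat_monoid:
  fixes Q :: "('a set, 'b) monoid_scheme"
  assumes Q: "group Q" and fin: "finite (carrier Q)"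
  obtains H :: "nat monoid" and f where "group H" "f \<in> iso Q H"
proof -
  obtain f :: "'a set \<Rightarrow> nat" where inj: "inj_on f (carrier Q)"
    using finite_imp_inj_to_nat_seg[OF fin] by blast
  have "f \<in> iso Q (flatten Q f)"
    using flatten_set_group_hom[OF Q inj] inj by (simp add: iso_def bij_betw_def flatten_def)
  then show ?thesis
    using that flatten_set_group[OF Q inj] by blast
qed

lemma comm_group_imp_solvable:
  assumes "comm_group G"
  shows "solvable G"
proof -
  interpret comm_group G by fact
  have "(derived G ^^ 1) (carrier G) = {\<one>\<^bsub>G\<^esub>}"
    using derived_eq_singleton by simp
  then show ?thesis
    using solvable_iff_trivial_derived_seq by blast
qed

lemma exists_nat_monoid_copy:
  fixes Q :: "('a set, 'b) monoid_scheme"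
  assumes simple: "simple_group Q" and fin: "finite (carrier Q)" and nonsolv: "\<not> solvable Q"
  obtains H :: "nat monoid" where "simple_group H" "finite (carrier H)" "\<not> comm_group H"
    "card (Solv H) \<le> card (Solv Q)"
proof -
  interpret Q: simple_group Q by fact
  obtain H :: "nat monoid" and f where H: "group H" and f: "f \<in> iso Q H"
    using exists_iso_nat_monoid[OF Q.is_group fin] by blast
  interpret f: group_hom Q H f
    using H f by (simp add: group_hom_def group_hom_axioms_def iso_def)
  have inj: "inj_on f (carrier Q)" and surj: "f ` carrier Q = carrier H"
    using f by (simp_all add: iso_def bij_betw_def)
  show ?thesis
  proof (rule that)
    show "simple_group H"
      by (rule Q.iso_simple[OF H f])
    show "finite (carrier H)"
      using fin surj finite_imageI by metis
    show "\<not> comm_group H"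
      using f.inj_hom_imp_solvable[OF inj] nonsolv comm_group_imp_solvable by blast
    have "kernel Q H f = {\<one>\<^bsub>Q\<^esub>}"
      using f iso_kernel_image[OF Q.is_group H] by blast
    then show "card (Solv H) \<le> card (Solv Q)"
      using f.card_Solv_le_of_solvable_kernel[OF fin _ surj] solvable_seq.unity[of Q] by simp
  qed
qed

theorem lemma5p2:
  fixes G :: "('a, 'b) monoid_scheme"
  assumes "group G" and "finite (carrier G)" and "\<not> solvable G"
  shows "\<exists>H :: nat monoid. simple_group H \<and> finite (carrier H) \<and> \<not> comm_group H
           \<and> card (Solv G) \<ge> card (Solv H)"
proof -
  interpret group G by fact
  obtain K N where K: "subgroup K G" and N: "N \<lhd> G\<lparr>carrier := K\<rparr>"
    and N_solv: "solvable_seq (G\<lparr>carrier := K\<rparr>) N"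
    and simple: "simple_group (G\<lparr>carrier := K\<rparr> Mod N)"
    and nonsolv: "\<not> solvable (G\<lparr>carrier := K\<rparr> Mod N)"
    using exists_nonsolvable_simple_section assms(2,3) by blast
  have fin_K: "finite K"
    using assms(2) subgroup.subset[OF K] finite_subset by blast
  then have fin_Q: "finite (carrier (G\<lparr>carrier := K\<rparr> Mod N))"
    by (simp add: FactGroup_def RCOSETS_def)
  have "card (Solv (G\<lparr>carrier := K\<rparr> Mod N)) \<le> card (Solv (G\<lparr>carrier := K\<rparr>))"
    using normal.card_Solv_FactGroup_le[OF N _ N_solv] fin_K by simp
  also have "\<dots> \<le> card (Solv G)"
    by (rule card_Solv_subgroup_le[OF assms(2) K])
  finally show ?thesis
    using exists_nat_monoid_copy[OF simple fin_Q nonsolv] order_trans by metis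
qed

end
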